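(* Let $n\geq 2$. In the double-edge digraph of the clustered graph of overlapping $n$-permutations, every directed cycle passes through exactly $n-1$ distinct clusters.
   Context: An $n$-permutation is a permutation $\pi_1\cdots\pi_n$ of $\{1,\ldots,n\}$. For a word $w$ of distinct numbers, $\mathrm{red}(w)$ is the permutation obtained by replacing the $i$-th smallest letter by $i$. For an $(n-1)$-permutation $\tau$, the cluster with signature $\tau$ is the set of all $n$-permutations $\pi$ with $\mathrm{red}(\pi_1\cdots\pi_{n-1})=\tau$. The clustered graph of overlapping $n$-permutations is the directed multigraph (loops allowed) whose vertices are the $(n-1)!$ clusters and in which every $n$-permutation $\pi$ contributes exactly one edge, going from the cluster containing $\pi$ to the cluster with signature $\mathrm{red}(\pi_2\cdots\pi_n)$. A double edge from $X$ to $Y$ is a pair of parallel edges from $X$ to $Y$. It is known that no pair of clusters is joined by three parallel edges, and that each cluster is the tail of exactly one double edge and the head of exactly one double edge. The double-edge digraph has the clusters as vertices and one arc $X\to Y$ for each double edge from $X$ to $Y$; by the preceding facts it is a disjoint union of directed cycles (a loop counting as a cycle through one cluster). *)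

theory Defs
  imports Main
begin

definition is_perm :: "nat \<Rightarrow> nat list \<Rightarrow> bool" where
  "is_perm n w \<longleftrightarrow> length w = n \<and> distinct w \<and> set w = {1..n}"

definition red :: "nat list \<Rightarrow> nat list" where
  "red w = map (\<lambda>x. card {y \<in> set w. y \<le> x}) w"

(* Edges of the clustered graph from cluster X to cluster Y (signatures):
   the n-permutations pi with red(pi_1..pi_{n-1}) = X and red(pi_2..pi_n) = Y. *)
definition edges :: "nat \<Rightarrow> nat list \<Rightarrow> nat list \<Rightarrow> nat list set" where
  "edges n X Y = {p. is_perm n p \<and> red (butlast p) = X \<and> red (tl p) = Y}"

definition double_arc :: "nat \<Rightarrow> nat list \<Rightarrow> nat list \<Rightarrow> bool" where
  "double_arc n X Y \<longleftrightarrow> card (edges n X Y) \<ge> 2"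

(* A directed cycle in the double-edge digraph: a nonempty list of distinct clusters
   (given by their signatures, (n-1)-permutations) X_0,...,X_{k-1} with arcs
   X_i -> X_{(i+1) mod k}; a loop is a cycle with k = 1. *)
definition double_cycle :: "nat \<Rightarrow> nat list list \<Rightarrow> bool" where
  "double_cycle n cs \<longleftrightarrow> cs \<noteq> [] \<and> distinct cs \<and> (\<forall>X\<in>set cs. is_perm (n - 1) X) \<and>
     (\<forall>i < length cs. double_arc n (cs ! i) (cs ! ((i + 1) mod length cs)))"

end

theory Submission
  imports Defs
begin

text \<open>Write an edge as a word \<open>u # m @ [v]\<close>. Reducing the prefix \<open>u # m\<close> or the suffix
  \<open>m @ [v]\<close> just lowers by one every letter above the omitted letter \<open>v\<close> resp. \<open>u\<close>.
  Two distinct edges with the same pair of signatures must differ in \<open>(u, v)\<close>, and comparing the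
  reduced first letters of the prefixes and last letters of the suffixes then forces \<open>u\<close> and
  \<open>v\<close> to be consecutive numbers; for consecutive \<open>u, v\<close> both reductions agree on \<open>m\<close>, so the
  head signature is the tail signature rotated by one place. Hence a cycle of the double-edge
  digraph is an orbit of cyclic rotation acting on a word of \<open>n - 1\<close> distinct letters, which
  has exactly \<open>n - 1\<close> elements.\<close>

definition rank_omitting :: "nat \<Rightarrow> nat \<Rightarrow> nat" where
  "rank_omitting v x = (if v < x then x - 1 else x)"

lemma card_atLeastAtMost_omitting_le:
  assumes "x \<in> {1..n} - {v}" "v \<in> {1..n}"
  shows "card {y \<in> {1..n} - {v}. y \<le> x} = rank_omitting v x"
proof -
  have "{y \<in> {1..n} - {v}. y \<le> x} = {1..x} - {v}"
    using assms by auto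
  then show ?thesis
    using assms by (auto simp: card_Diff_singleton_if rank_omitting_def)
qed

lemma red_eq_map_rank_omitting:
  assumes "set w = {1..n} - {v}" "v \<in> {1..n}"
  shows "red w = map (rank_omitting v) w"
  unfolding red_def using assms card_atLeastAtMost_omitting_le by (auto intro!: map_cong)

lemma inj_on_rank_omitting: "inj_on (rank_omitting v) (- {v})"
  by (auto simp: inj_on_def rank_omitting_def split: if_splits)

lemma rank_omitting_consecutive:
  assumes "u = v + 1 \<or> v = u + 1"
  shows "rank_omitting u v = rank_omitting v u"
    and "x \<noteq> u \<Longrightarrow> x \<noteq> v \<Longrightarrow> rank_omitting u x = rank_omitting v x"
  using assms by (auto simp: rank_omitting_def)

lemma rank_omitting_pairs_eq_consecutive:
  assumes "u \<noteq> v" "u' \<noteq> v'" "(u, v) \<noteq> (u', v')"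
    and "rank_omitting v u = rank_omitting v' u'" "rank_omitting u v = rank_omitting u' v'"
  shows "u = v + 1 \<or> v = u + 1"
  using assms by (auto simp: rank_omitting_def split: if_splits)

lemma length_ge_2_obtain_Cons_snoc:
  assumes "length p \<ge> 2"
  obtains u m v where "p = u # m @ [v]"
proof (cases p)
  case (Cons u t)
  with assms have "t \<noteq> []" by auto
  then obtain m v where "t = m @ [v]" by (metis rev_exhaust)
  with Cons that show ?thesis by blast
qed (use assms in simp)

lemma red_prefix_suffix_perm:
  assumes "is_perm n (u # m @ [v])"
  shows "red (u # m) = map (rank_omitting v) (u # m)"
    and "red (m @ [v]) = map (rank_omitting u) (m @ [v])"
proof -
  have "distinct (u # m @ [v])" "set (u # m @ [v]) = {1..n}"
    using assms unfolding is_perm_def by auto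
  then have "set (u # m) = {1..n} - {v}" "set (m @ [v]) = {1..n} - {u}" "u \<in> {1..n}" "v \<in> {1..n}"
    by auto
  then show "red (u # m) = map (rank_omitting v) (u # m)"
    and "red (m @ [v]) = map (rank_omitting u) (m @ [v])"
    by (simp_all add: red_eq_map_rank_omitting)
qed

lemma double_arc_rotate1:
  assumes "n \<ge> 2" "double_arc n X Y"
  shows "Y = rotate1 X"
proof -
  obtain p q where pq: "p \<in> edges n X Y" "q \<in> edges n X Y" "p \<noteq> q"
    using assms(2) unfolding double_arc_def
    by (metis card_le_Suc0_iff_eq not_less_eq_eq numeral_2_eq_2 card.infinite zero_le)
  have perms: "is_perm n p" "is_perm n q"
    using pq by (auto simp: edges_def)
  have "length p \<ge> 2" "length q \<ge> 2"
    using perms assms(1) unfolding is_perm_def by auto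
  then obtain u m v u' m' v' where p: "p = u # m @ [v]" and q: "q = u' # m' @ [v']"
    by (metis length_ge_2_obtain_Cons_snoc)
  have X: "X = map (rank_omitting v) (u # m)" "X = map (rank_omitting v') (u' # m')"
    using pq perms red_prefix_suffix_perm(1) by (auto simp: edges_def p q)
  have Y: "Y = map (rank_omitting u) (m @ [v])" "Y = map (rank_omitting u') (m' @ [v'])"
    using pq perms red_prefix_suffix_perm(2) by (auto simp: edges_def p q)
  have dist: "u \<noteq> v" "u \<notin> set m" "v \<notin> set m" "u' \<noteq> v'" "v' \<notin> set m'"
    using perms by (auto simp: is_perm_def p q)
  have ends: "rank_omitting v u = rank_omitting v' u'" "rank_omitting u v = rank_omitting u' v'"
    using X Y by auto
  have "(u, v) \<noteq> (u', v')"
  proof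
    assume same: "(u, v) = (u', v')"
    with X have "map (rank_omitting v) m = map (rank_omitting v) m'" by simp
    moreover have "inj_on (rank_omitting v) (set m \<union> set m')"
      using dist same by (auto intro: inj_on_subset[OF inj_on_rank_omitting])
    ultimately have "m = m'" by (simp add: inj_on_map_eq_map)
    with same pq(3) show False by (simp add: p q)
  qed
  then have consecutive: "u = v + 1 \<or> v = u + 1"
    by (rule rank_omitting_pairs_eq_consecutive[OF dist(1,4) _ ends])
  have "Y = map (rank_omitting u) m @ [rank_omitting u v]"
    using Y(1) by simp
  also have "\<dots> = map (rank_omitting v) m @ [rank_omitting v u]"
  proof -
    have "rank_omitting u x = rank_omitting v x" if "x \<in> set m" for x
      using that dist(2,3) rank_omitting_consecutive(2)[OF consecutive] by metis
    then show ?thesis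
      using rank_omitting_consecutive(1)[OF consecutive] by simp
  qed
  also have "\<dots> = rotate1 X"
    using X(1) by simp
  finally show ?thesis .
qed

lemma rotate_distinct_eq_iff:
  assumes "distinct xs" "xs \<noteq> []"
  shows "rotate k xs = xs \<longleftrightarrow> k mod length xs = 0"
proof
  assume fixed: "rotate k xs = xs"
  show "k mod length xs = 0"
  proof (rule ccontr)
    assume "k mod length xs \<noteq> 0"
    have "xs ! (k mod length xs) = xs ! 0"
      using fixed nth_rotate[of 0 xs k] assms(2) by simp
    with \<open>k mod length xs \<noteq> 0\<close> assms show False
      by (simp add: nth_eq_iff_index_eq)
  qed
qed (rule rotate_id)

lemma rotation_cycle_length:
  assumes "cs \<noteq> []" "distinct cs" "distinct (cs ! 0)" "cs ! 0 \<noteq> []"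
    and step: "\<And>i. i < length cs \<Longrightarrow> cs ! ((i + 1) mod length cs) = rotate1 (cs ! i)"
  shows "length cs = length (cs ! 0)"
proof -
  define k where "k = length cs"
  have "k > 0" using assms(1) by (simp add: k_def)
  have orbit: "cs ! i = rotate i (cs ! 0)" if "i < k" for i
    using that
  proof (induction i)
    case (Suc i)
    then have "cs ! Suc i = rotate1 (cs ! i)"
      using step[of i] by (simp add: k_def)
    with Suc show ?case by simp
  qed simp
  have "cs ! 0 = rotate1 (cs ! (k - 1))"
    using step[of "k - 1"] \<open>k > 0\<close> by (simp add: k_def)
  also have "\<dots> = rotate1 (rotate (k - 1) (cs ! 0))"
    using orbit[of "k - 1"] \<open>k > 0\<close> by simp
  also have "\<dots> = rotate k (cs ! 0)"
    using rotate_Suc[of "k - 1" "cs ! 0"] Suc_diff_1[OF \<open>k > 0\<close>] by simp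
  finally have "rotate k (cs ! 0) = cs ! 0"
    by (rule sym)
  then have "k mod length (cs ! 0) = 0"
    by (rule rotate_distinct_eq_iff[OF assms(3,4), THEN iffD1])
  with \<open>k > 0\<close> have "length (cs ! 0) \<le> k"
    by (simp add: dvd_imp_le mod_eq_0_iff_dvd)
  moreover have "\<not> length (cs ! 0) < k"
  proof
    assume less: "length (cs ! 0) < k"
    then have "cs ! length (cs ! 0) = cs ! 0"
      using orbit[of "length (cs ! 0)"] by simp
    moreover have "length (cs ! 0) \<noteq> 0"
      using assms(4) by simp
    ultimately show False
      using nth_eq_iff_index_eq[OF assms(2), of "length (cs ! 0)" 0] less \<open>k > 0\<close>
      by (simp add: k_def)
  qed
  ultimately show ?thesis by (simp add: k_def)
qed

theorem lemma4:
  fixes n :: nat and cs :: "nat list list"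
  assumes "n \<ge> 2" and "double_cycle n cs"
  shows "length cs = n - 1"
proof -
  have cycle: "cs \<noteq> []" "distinct cs" "is_perm (n - 1) (cs ! 0)"
    using assms(2) unfolding double_cycle_def by auto
  then have first: "length (cs ! 0) = n - 1" "distinct (cs ! 0)" "cs ! 0 \<noteq> []"
    using assms(1) unfolding is_perm_def by auto
  have "cs ! ((i + 1) mod length cs) = rotate1 (cs ! i)" if "i < length cs" for i
  proof (rule double_arc_rotate1[OF assms(1)])
    show "double_arc n (cs ! i) (cs ! ((i + 1) mod length cs))"
      using assms(2) that unfolding double_cycle_def by simp
  qed
  then have "length cs = length (cs ! 0)"
    by (rule rotation_cycle_length[OF cycle(1,2) first(2,3)])
  with first(1) show ?thesis by simp
qed

end
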